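(* Let $t,t'$ be even integers and let $B'\in\mathcal X^{t',-}_{N-2}$, $B\in\mathcal X^{t,-}_{N-2}$ with $B'\preceq B$. If $t\ge0$, then $t'=t$ or $|t'+1|<|t+1|$.
   Context: Let $N\ge 3$ be an odd integer and $F=\mathbb Z/2\mathbb Z$. For integers $i,j$ let $[i,j]=\{h\in\mathbb Z: i\le h\le j\}$ (empty if $i>j$). Let $S_N=[1,N]$. The set of all subsets of $S_N$ is an $F$-vector space with sum $X+X'=(X\cup X')-(X\cap X')$; let $E_N$ be the subspace of subsets of even cardinality. A $2$-element subset $\{i,j\}\subseteq S_N$ is written $ij$ when either ($i<j$ and $j-i$ odd) or ($i>j$ and $i-j$ even); each $2$-element subset has exactly one such writing. Let $\mathcal P_N$ be the set of all finite sets $B$ of pairwise disjoint $2$-element subsets of $S_N$; for $B\in\mathcal P_N$ let $\langle B\rangle$ be the $F$-subspace of $E_N$ spanned by the elements of $B$, $\mathrm{supp}(B)=\bigcup_{X\in B}X$, $B^0=\{\{i,j\}\in B: i-j\text{ even}\}$, $B^1=\{\{i,j\}\in B: i-j\text{ odd}\}$. A set $X\subseteq S_N$ is $0$-covered (resp. $1$-covered) by $B^1$ if there are $a_1b_1,\dots,a_sb_s\in B^1$ ($s\ge 0$, so $a_r<b_r$) with $X=[a_1,b_1]\sqcup\dots\sqcup[a_s,b_s]$ (resp. $X=[a_1,b_1]\sqcup\dots\sqcup[a_s,b_s]\sqcup\{u\}$ for some $u$), disjoint unions. Let ${}^*\mathcal P_N$ be the set of $B\in\mathcal P_N$ such that: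 for every $ij\in B^1$ the set $[i+1,j-1]$ is $0$-covered by $B^1$; and there is a sequence $i_*(B)=(i_1,\dots,i_{2s})$ in $S_N$ with $B^0=\{i_{2s}i_1,i_{2s-1}i_2,\dots,i_{s+1}i_s\}$ (so $s=|B^0|$; the sequence is unique) such that, if $s\ge1$, each of $[i_1+1,i_2-1],\dots,[i_{s-1}+1,i_s-1],[i_{s+1}+1,i_{s+2}-1],\dots,[i_{2s-1}+1,i_{2s}-1]$ is $0$-covered by $B^1$. For $B\in{}^*\mathcal P_N$ with $i_*(B)=(i_1,\dots,i_{2s})$ consider: (I) $s=0$, or $s\ge1$ and $[1,i_1-1]$ and $[i_{2s}+1,N]$ are $0$-covered by $B^1$; (II) $N\notin\mathrm{supp}(B)$ and either $s=0$, or $s$ is odd and either (i) $[1,i_1-1]$ is $1$-covered and $[i_{2s}+1,N-1]$ is $0$-covered by $B^1$, or (ii) $[1,i_1-1]$ is $0$-covered and $[i_{2s}+1,N-1]$ is $1$-covered by $B^1$; (III) (I) holds and, if $s$ is even then $\{i,N\}\in B$ for some even $i$, if $s$ is odd then $\{i,N\}\in B$ for some odd $i$. Let $\mathcal X^+_{N-2}$, $\mathcal X^-_{N-2}$ be the sets of $B\in{}^*\mathcal P_N$ satisfying (II), (III) respectively, and $\mathcal X_{N-2}=\mathcal X^+_{N-2}\sqcup\mathcal X^-_{N-2}$. For $B\in\mathcal X^+_{N-2}$ with $s\ge1$ there is a unique $u_B$: in case (i), $u_B\in[1,i_1-1]$ with $[1,u_B-1]$, $[u_B+1,i_1-1]$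 $0$-covered by $B^1$ ($u_B$ odd); in case (ii), $u_B\in[i_{2s}+1,N-1]$ with $[i_{2s}+1,u_B-1]$, $[u_B+1,N-1]$ $0$-covered by $B^1$ ($u_B$ even). For even $t$: $\mathcal X^{0,-}_{N-2}=\{B\in\mathcal X^-_{N-2}:|B^0|=0\}$; for $t\ge2$, $\mathcal X^{t,-}_{N-2}=\{B\in\mathcal X^-_{N-2}:|B^0|=t,\ \{i,N\}\in B\text{ for some even }i\}$; for $t\le -2$, $\mathcal X^{t,-}_{N-2}=\{B\in\mathcal X^-_{N-2}:|B^0|=-t-1,\ \{i,N\}\in B\text{ for some odd }i\}$. Put $[[ij]]=[i,j]$ if $i<j$ and $[[ij]]=[i,N]\cup[1,j]$ if $i>j$. For $B\in\mathcal X_{N-2}$ define ${}'\epsilon(B)\in E_N$: ${}'\epsilon(B)=\sum_{ij\in B}[[ij]]$ if $B\in\mathcal X^-_{N-2}$ or if $B\in\mathcal X^+_{N-2}$ with $|B^0|=0$; ${}'\epsilon(B)=\sum_{ij\in B}[[ij]]+[u_B,N]$ if $B\in\mathcal X^+_{N-2}$, $|B^0|$ odd, $u_B$ even; ${}'\epsilon(B)=\sum_{ij\in B}[[ij]]+\{N\}+[1,u_B]$ if $B\in\mathcal X^+_{N-2}$, $|B^0|$ odd, $u_B$ odd. For $B,B'\in\mathcal X_{N-2}$ write $B'\preceq B$ if there is a sequence $B'=B_0,\dots,B_h=B$ ($h\ge0$) in $\mathcal X_{N-2}$ with ${}'\epsilon(B_k)\in\langle B_{k+1}\rangle$ for $k=0,\dots,h-1$.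 *)

theory Defs
  imports Main
begin

definition SN :: "nat \<Rightarrow> nat set" where "SN N = {1..N}"

definition symd :: "nat set \<Rightarrow> nat set \<Rightarrow> nat set" where
  "symd X Y = (X - Y) \<union> (Y - X)"

text \<open>F_2-sum of a finite family: h belongs to it iff it lies in an odd number of members.\<close>
definition fsum :: "('a \<Rightarrow> nat set) \<Rightarrow> 'a set \<Rightarrow> nat set" where
  "fsum f A = {h. odd (card {x\<in>A. h \<in> f x})}"

definition span2 :: "nat set set \<Rightarrow> nat set set" where
  "span2 B = {fsum id C | C. C \<subseteq> B}"

definition wr :: "nat \<Rightarrow> nat \<Rightarrow> bool" where
  "wr i j \<longleftrightarrow> (i < j \<and> odd (j - i)) \<or> (j < i \<and> even (i - j))"

definition inP :: "nat \<Rightarrow> nat set set \<Rightarrow> bool" where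
  "inP N B \<longleftrightarrow> finite B \<and> (\<forall>p\<in>B. p \<subseteq> SN N \<and> card p = 2)
     \<and> (\<forall>p\<in>B. \<forall>q\<in>B. p \<noteq> q \<longrightarrow> p \<inter> q = {})"

definition B0 :: "nat set set \<Rightarrow> nat set set" where
  "B0 B = {p\<in>B. \<exists>i j. p = {i,j} \<and> i \<noteq> j \<and> even (int i - int j)}"

definition B1 :: "nat set set \<Rightarrow> nat set set" where
  "B1 B = {p\<in>B. \<exists>i j. p = {i,j} \<and> i \<noteq> j \<and> odd (int i - int j)}"

definition ival :: "nat set \<Rightarrow> nat set" where
  "ival p = {Min p..Max p}"

definition cov0 :: "nat set set \<Rightarrow> nat set \<Rightarrow> bool" where
  "cov0 B X \<longleftrightarrow> (\<exists>C. C \<subseteq> B1 B \<and> (\<forall>p\<in>C. \<forall>q\<in>C. p \<noteq> q \<longrightarrow> ival p \<inter> ival q = {})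
      \<and> X = \<Union>(ival ` C))"

definition cov1 :: "nat set set \<Rightarrow> nat set \<Rightarrow> bool" where
  "cov1 B X \<longleftrightarrow> (\<exists>C u. C \<subseteq> B1 B \<and> (\<forall>p\<in>C. \<forall>q\<in>C. p \<noteq> q \<longrightarrow> ival p \<inter> ival q = {})
      \<and> u \<notin> \<Union>(ival ` C) \<and> X = \<Union>(ival ` C) \<union> {u})"

text \<open>Admissible sequences i_*(B) = (i_1,...,i_2s), stored 0-based: i_k = xs ! (k-1).
  The sequence is taken strictly increasing (this is what makes it unique).\<close>
definition seqOK :: "nat \<Rightarrow> nat set set \<Rightarrow> nat list \<Rightarrow> bool" where
  "seqOK N B xs \<longleftrightarrow> (let s = card (B0 B) in
      length xs = 2 * s \<and> set xs \<subseteq> SN N \<and> sorted_wrt (<) xs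
    \<and> B0 B = {{xs ! (2*s - 1 - k), xs ! k} | k. k < s}
    \<and> (\<forall>k<s. wr (xs ! (2*s - 1 - k)) (xs ! k))
    \<and> (\<forall>k. k + 1 < s \<longrightarrow> cov0 B {xs ! k + 1 .. xs ! (k+1) - 1})
    \<and> (\<forall>k. s \<le> k \<and> k + 1 < 2*s \<longrightarrow> cov0 B {xs ! k + 1 .. xs ! (k+1) - 1}))"

definition iseq :: "nat \<Rightarrow> nat set set \<Rightarrow> nat list" where
  "iseq N B = (THE xs. seqOK N B xs)"

definition starP :: "nat \<Rightarrow> nat set set \<Rightarrow> bool" where
  "starP N B \<longleftrightarrow> inP N B
     \<and> (\<forall>p\<in>B1 B. cov0 B {Min p + 1 .. Max p - 1})
     \<and> (\<exists>xs. seqOK N B xs)"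

definition condI :: "nat \<Rightarrow> nat set set \<Rightarrow> bool" where
  "condI N B \<longleftrightarrow> (let s = card (B0 B); xs = iseq N B in
     s = 0 \<or> (s \<ge> 1 \<and> cov0 B {1 .. xs ! 0 - 1} \<and> cov0 B {xs ! (2*s - 1) + 1 .. N}))"

definition caseI :: "nat \<Rightarrow> nat set set \<Rightarrow> bool" where
  "caseI N B \<longleftrightarrow> (let s = card (B0 B); xs = iseq N B in
     cov1 B {1 .. xs ! 0 - 1} \<and> cov0 B {xs ! (2*s - 1) + 1 .. N - 1})"

definition caseII :: "nat \<Rightarrow> nat set set \<Rightarrow> bool" where
  "caseII N B \<longleftrightarrow> (let s = card (B0 B); xs = iseq N B in
     cov0 B {1 .. xs ! 0 - 1} \<and> cov1 B {xs ! (2*s - 1) + 1 .. N - 1})"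

definition condII :: "nat \<Rightarrow> nat set set \<Rightarrow> bool" where
  "condII N B \<longleftrightarrow> N \<notin> \<Union>B \<and>
     (card (B0 B) = 0 \<or> (odd (card (B0 B)) \<and> (caseI N B \<or> caseII N B)))"

definition condIII :: "nat \<Rightarrow> nat set set \<Rightarrow> bool" where
  "condIII N B \<longleftrightarrow> condI N B
     \<and> (even (card (B0 B)) \<longrightarrow> (\<exists>i. even i \<and> {i, N} \<in> B))
     \<and> (odd (card (B0 B)) \<longrightarrow> (\<exists>i. odd i \<and> {i, N} \<in> B))"

definition Xp :: "nat \<Rightarrow> nat set set set" where
  "Xp N = {B. starP N B \<and> condII N B}"

definition Xm :: "nat \<Rightarrow> nat set set set" where
  "Xm N = {B. starP N B \<and> condIII N B}"

definition XX :: "nat \<Rightarrow> nat set set set" where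
  "XX N = Xp N \<union> Xm N"

definition Xtm :: "nat \<Rightarrow> int \<Rightarrow> nat set set set" where
  "Xtm N t = (if t = 0 then {B\<in>Xm N. card (B0 B) = 0}
     else if t \<ge> 2 then {B\<in>Xm N. int (card (B0 B)) = t \<and> (\<exists>i. even i \<and> {i, N} \<in> B)}
     else if t \<le> -2 then {B\<in>Xm N. int (card (B0 B)) = - t - 1 \<and> (\<exists>i. odd i \<and> {i, N} \<in> B)}
     else {})"

definition uB :: "nat \<Rightarrow> nat set set \<Rightarrow> nat" where
  "uB N B = (let s = card (B0 B); xs = iseq N B in
     if caseI N B then
       (THE u. u \<in> {1 .. xs ! 0 - 1} \<and> cov0 B {1 .. u - 1} \<and> cov0 B {u + 1 .. xs ! 0 - 1})
     else
       (THE u. u \<in> {xs ! (2*s - 1) + 1 .. N - 1} \<and> cov0 B {xs ! (2*s - 1) + 1 .. u - 1}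
          \<and> cov0 B {u + 1 .. N - 1}))"

definition dbr :: "nat \<Rightarrow> nat \<Rightarrow> nat \<Rightarrow> nat set" where
  "dbr N i j = (if i < j then {i..j} else {i..N} \<union> {1..j})"

definition eps :: "nat \<Rightarrow> nat set set \<Rightarrow> nat set" where
  "eps N B = (let S = fsum (\<lambda>(i,j). dbr N i j) {(i,j). {i,j} \<in> B \<and> wr i j}; u = uB N B in
     if B \<in> Xm N \<or> card (B0 B) = 0 then S
     else if even u then symd S {u..N}
     else symd (symd S {N}) {1..u})"

definition preceq :: "nat \<Rightarrow> nat set set \<Rightarrow> nat set set \<Rightarrow> bool" where
  "preceq N B' B \<longleftrightarrow> B' \<in> XX N \<and> B \<in> XX N \<and>
     (\<lambda>X Y. X \<in> XX N \<and> Y \<in> XX N \<and> eps N X \<in> span2 Y)\<^sup>*\<^sup>* B' B"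

end

theory Submission
  imports Defs
begin

(* Write alt E for the alternating sum of (-1)^h over h in E.  For B in X^-_{N-2} with s = |B^0|,
   the arcs [[ij]] of the pairs of B^1 are their intervals [a,b], which are nested or disjoint,
   while the arcs of the pairs i_{k+1} i_{2s-k} of B^0 wrap around N and are nested.  Hence
   'epsilon(B) is a union of pairs of B: some pairs of B^1, each of alternating sum 0, and the
   k-th pair of B^0 exactly when s - k is odd; since the i_k alternate in parity, that pair has
   alternating sum -2 or 2 as k is even or odd.  This gives alt('epsilon(B)) = t for B in
   X^{t,-}, and (III) puts N into 'epsilon(B).  So if 'epsilon(B) lies in <B'>, then N is in
   supp(B'), which rules out B' in X^+, and as the pairs of B' are disjoint, 'epsilon(B) is a
   union of some of them, with alternating sum in [-2 ceil(s'/2), 2 floor(s'/2)] for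
   s' = |B'^0|.  These intervals are nested along a chain, so B' <= B with B in X^{t,-},
   t >= 0, forces t' into [-t, t]. *)

section \<open>Pairings and their spans\<close>

lemma inP_obtain_pair:
  assumes "inP N X" "p \<in> X"
  obtains a b where "a < b" "p = {a,b}" "1 \<le> a" "b \<le> N"
proof -
  from assms have "card p = 2" and sub: "p \<subseteq> SN N" unfolding inP_def by auto
  then obtain x y where xy: "p = {x,y}" "x \<noteq> y" by (auto simp: card_2_iff)
  show thesis
  proof (cases "x < y")
    case True
    then show thesis using xy sub by (intro that[of x y]) (auto simp: SN_def)
  next
    case False
    then show thesis using xy sub by (intro that[of y x]) (auto simp: SN_def)
  qed
qed

lemma inP_finite: "inP N X \<Longrightarrow> finite X"
  unfolding inP_def by blast

lemma inP_disjoint: "inP N X \<Longrightarrow> p \<in> X \<Longrightarrow> q \<in> X \<Longrightarrow> p \<noteq> q \<Longrightarrow> p \<inter> q = {}"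
  unfolding inP_def by blast

lemma doubleton_diff_even_iff:
  assumes "{i,j} = {a,b}" "(a::nat) < b"
  shows "even (int i - int j) \<longleftrightarrow> even (b - a)"
proof -
  from assms have "(i = a \<and> j = b) \<or> (i = b \<and> j = a)" by (auto simp: doubleton_eq_iff)
  then show ?thesis using assms(2) by (auto simp: even_diff_nat[symmetric])
qed

lemma B0_doubleton_iff:
  assumes "(a::nat) < b" shows "{a,b} \<in> B0 X \<longleftrightarrow> {a,b} \<in> X \<and> even (b - a)"
  unfolding B0_def using doubleton_diff_even_iff[OF _ assms] assms by auto

lemma B1_doubleton_iff:
  assumes "(a::nat) < b" shows "{a,b} \<in> B1 X \<longleftrightarrow> {a,b} \<in> X \<and> odd (b - a)"
  unfolding B1_def using doubleton_diff_even_iff[OF _ assms] assms by auto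

lemma B0_subset: "B0 X \<subseteq> X"
  by (auto simp: B0_def)

lemma B1_subset: "B1 X \<subseteq> X"
  by (auto simp: B1_def)

lemma B0_B1_disjoint: "B0 X \<inter> B1 X = {}"
  by (auto simp: B0_def B1_def doubleton_eq_iff)

lemma B0_Un_B1:
  assumes "inP N X" shows "B0 X \<union> B1 X = X"
proof
  show "X \<subseteq> B0 X \<union> B1 X"
  proof
    fix p assume "p \<in> X"
    moreover obtain a b where "a < b" "p = {a,b}" using inP_obtain_pair[OF assms \<open>p \<in> X\<close>] .
    ultimately show "p \<in> B0 X \<union> B1 X" using B0_doubleton_iff B1_doubleton_iff by auto
  qed
qed (use B0_subset B1_subset in auto)

lemma B1_obtain_pair:
  assumes "inP N X" "p \<in> B1 X"
  obtains a b where "a < b" "p = {a,b}" "odd (b - a)" "Min p = a" "Max p = b" "ival p = {a..b}"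
    "1 \<le> a" "b \<le> N"
proof -
  obtain a b where ab: "a < b" "p = {a,b}" "1 \<le> a" "b \<le> N"
    using inP_obtain_pair[OF assms(1)] assms(2) B1_subset by blast
  then show thesis using that B1_doubleton_iff[OF ab(1)] assms(2) by (auto simp: ival_def)
qed

lemma fsum_id_disjoint:
  assumes "\<forall>p\<in>C. \<forall>q\<in>C. p \<noteq> q \<longrightarrow> p \<inter> q = {}"
  shows "fsum id C = \<Union>C"
proof -
  have "odd (card {x\<in>C. h \<in> x}) \<longleftrightarrow> h \<in> \<Union>C" for h
  proof (cases "h \<in> \<Union>C")
    case True
    then obtain x where "x \<in> C" "h \<in> x" by auto
    with assms have "{x\<in>C. h \<in> x} = {x}" by auto
    then show ?thesis using True by simp
  next
    case False
    then have "{x\<in>C. h \<in> x} = {}" by auto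
    then show ?thesis using False by (simp only: card.empty) simp
  qed
  then show ?thesis unfolding fsum_def by auto
qed

lemma span2_obtain_Union:
  assumes "inP N Y" "E \<in> span2 Y"
  obtains C where "C \<subseteq> Y" "E = \<Union>C"
proof -
  from assms(2) obtain C where C: "C \<subseteq> Y" "E = fsum id C" unfolding span2_def by blast
  have "\<forall>p\<in>C. \<forall>q\<in>C. p \<noteq> q \<longrightarrow> p \<inter> q = {}" using C(1) inP_disjoint[OF assms(1)] by blast
  then show thesis using that C fsum_id_disjoint by metis
qed

lemma cov0_even_card:
  assumes "inP N X" "cov0 X Y"
  shows "even (card Y)"
proof -
  from assms(2) obtain C where C: "C \<subseteq> B1 X" "\<forall>p\<in>C. \<forall>q\<in>C. p \<noteq> q \<longrightarrow> ival p \<inter> ival q = {}"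
     "Y = \<Union>(ival ` C)" unfolding cov0_def by blast
  have "finite C"
    using finite_subset[OF subset_trans[OF C(1) B1_subset] inP_finite[OF assms(1)]] .
  have "even (card (ival p))" if "p \<in> C" for p
  proof -
    have "p \<in> B1 X" using that C(1) by blast
    then obtain a b where "a < b" "odd (b - a)" "ival p = {a..b}"
      by (elim B1_obtain_pair[OF assms(1)])
    then show ?thesis by auto
  qed
  moreover have "card Y = (\<Sum>p\<in>C. card (ival p))" unfolding C(3)
    by (rule card_UN_disjoint) (use \<open>finite C\<close> C(2) in \<open>auto simp: ival_def\<close>)
  ultimately show ?thesis by (simp add: dvd_sum)
qed

lemma seqOK_set:
  assumes "seqOK N X xs"
  shows "set xs = \<Union>(B0 X)"
proof -
  let ?s = "card (B0 X)"
  have L: "length xs = 2 * ?s" and E: "B0 X = {{xs ! (2*?s - 1 - k), xs ! k} | k. k < ?s}"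
    using assms unfolding seqOK_def Let_def by auto
  have pair_in_B0: "{xs ! (2*?s - 1 - k), xs ! k} \<in> B0 X" if "k < ?s" for k
    using that E by blast
  have nth_in: "xs ! m \<in> \<Union>(B0 X)" if "m < 2 * ?s" for m
  proof (cases "m < ?s")
    case True
    then show ?thesis using pair_in_B0[of m] by blast
  next
    case False
    then have k: "2*?s - 1 - m < ?s" and m: "2*?s - 1 - (2*?s - 1 - m) = m" using that by auto
    have "xs ! m \<in> {xs ! (2*?s - 1 - (2*?s - 1 - m)), xs ! (2*?s - 1 - m)}" unfolding m by simp
    then show ?thesis using pair_in_B0[OF k] by blast
  qed
  have in_set: "x \<in> set xs" if x: "x \<in> \<Union>(B0 X)" for x
  proof -
    obtain k where "k < ?s" "x = xs ! (2*?s - 1 - k) \<or> x = xs ! k" using x E by auto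
    then show ?thesis using L by auto
  qed
  show ?thesis
  proof
    show "set xs \<subseteq> \<Union>(B0 X)" using nth_in L by (auto simp: in_set_conv_nth)
    show "\<Union>(B0 X) \<subseteq> set xs" using in_set by blast
  qed
qed

lemma iseq_eqI:
  assumes "seqOK N X xs"
  shows "iseq N X = xs"
proof -
  have "ys = xs" if "seqOK N X ys" for ys
    using strict_sorted_equal[of ys xs] seqOK_set[OF assms] seqOK_set[OF that] assms that
    unfolding seqOK_def Let_def by auto
  then show ?thesis unfolding iseq_def using assms by blast
qed

section \<open>The members of \<open>X\<^sup>-\<^sub>N\<^sub>-\<^sub>2\<close>\<close>

locale star_condI =
  fixes N :: nat and X :: "nat set set" and xs :: "nat list" and s :: nat
  assumes inP: "inP N X"
    and B1_inner_cov0: "\<And>p. p \<in> B1 X \<Longrightarrow> cov0 X {Min p + 1 .. Max p - 1}"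
    and seqOK: "seqOK N X xs"
    and s_def: "s = card (B0 X)"
    and left_cov0: "s \<ge> 1 \<Longrightarrow> cov0 X {1 .. xs ! 0 - 1}"
    and right_cov0: "s \<ge> 1 \<Longrightarrow> cov0 X {xs ! (2*s - 1) + 1 .. N}"
begin

lemma length_xs: "length xs = 2*s"
  using seqOK s_def unfolding seqOK_def Let_def by auto

lemma B0_eq: "B0 X = {{xs ! (2*s - 1 - k), xs ! k} | k. k < s}"
  using seqOK s_def unfolding seqOK_def Let_def by auto

lemma lower_gap_cov0: "k + 1 < s \<Longrightarrow> cov0 X {xs ! k + 1 .. xs ! (k+1) - 1}"
  using seqOK s_def unfolding seqOK_def Let_def by auto

lemma upper_gap_cov0: "s \<le> k \<Longrightarrow> k + 1 < 2*s \<Longrightarrow> cov0 X {xs ! k + 1 .. xs ! (k+1) - 1}"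
  using seqOK s_def unfolding seqOK_def Let_def by auto

lemma nth_less_iff: "i < 2*s \<Longrightarrow> j < 2*s \<Longrightarrow> xs ! i < xs ! j \<longleftrightarrow> i < j"
proof -
  have "sorted_wrt (<) xs" using seqOK unfolding seqOK_def Let_def by auto
  then show "i < 2*s \<Longrightarrow> j < 2*s \<Longrightarrow> xs ! i < xs ! j \<longleftrightarrow> i < j"
    using sorted_wrt_nth_less length_xs by (metis less_asym' linorder_neqE_nat)
qed

lemma nth_le_iff: "i < 2*s \<Longrightarrow> j < 2*s \<Longrightarrow> xs ! i \<le> xs ! j \<longleftrightarrow> i \<le> j"
  using nth_less_iff by (meson linorder_not_less)

lemma nth_bounds: "i < 2*s \<Longrightarrow> 1 \<le> xs ! i \<and> xs ! i \<le> N"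
proof -
  assume "i < 2*s"
  then have "xs ! i \<in> set xs" using length_xs by auto
  moreover have "set xs \<subseteq> SN N" using seqOK unfolding seqOK_def Let_def by auto
  ultimately show ?thesis by (auto simp: SN_def)
qed

definition B0_pair :: "nat \<Rightarrow> nat set" where
  "B0_pair k = {xs ! k, xs ! (2*s - 1 - k)}"

lemma B0_eq_image: "B0 X = B0_pair ` {..<s}"
  unfolding B0_eq B0_pair_def by (auto simp: insert_commute)

lemma B0_pair_less: "k < s \<Longrightarrow> xs ! k < xs ! (2*s - 1 - k)"
  using nth_less_iff by auto

lemma B0_pair_Min_Max: "k < s \<Longrightarrow> Min (B0_pair k) = xs ! k \<and> Max (B0_pair k) = xs ! (2*s - 1 - k)"
  using B0_pair_less unfolding B0_pair_def by auto

lemma B0_pair_in_B0: "k < s \<Longrightarrow> B0_pair k \<in> B0 X"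
  using B0_eq_image by auto

lemma B0_pair_in_X: "k < s \<Longrightarrow> B0_pair k \<in> X"
  using B0_pair_in_B0 B0_subset by blast

lemma B0_pair_diff_even: "k < s \<Longrightarrow> even (xs ! (2*s - 1 - k) - xs ! k)"
  using B0_pair_in_B0 B0_doubleton_iff[OF B0_pair_less] unfolding B0_pair_def by blast

lemma inj_on_B0_pair: "inj_on B0_pair {..<s}"
proof
  fix k k' assume k: "k \<in> {..<s}" "k' \<in> {..<s}" and eq: "B0_pair k = B0_pair k'"
  have "xs ! k \<in> B0_pair k'" using eq unfolding B0_pair_def by auto
  then have "xs ! k = xs ! k' \<or> xs ! k = xs ! (2*s - 1 - k')" unfolding B0_pair_def by auto
  moreover have "xs ! k \<noteq> xs ! (2*s - 1 - k')"
    using nth_less_iff[of k "2*s - 1 - k'"] k by auto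
  moreover have "xs ! k = xs ! k' \<Longrightarrow> k = k'"
    using nth_less_iff[of k k'] nth_less_iff[of k' k] k by (metis lessThan_iff less_irrefl
        linorder_neqE_nat mult_2 trans_less_add1)
  ultimately show "k = k'" by blast
qed

lemma X_cases: "q \<in> X \<Longrightarrow> q \<in> B1 X \<or> (\<exists>k<s. q = B0_pair k)"
  using B0_Un_B1[OF inP] B0_eq_image by blast

text \<open>The intervals of \<open>B\<^sup>1\<close> are nested or disjoint.\<close>

lemma B1_ival_nested:
  assumes "p \<in> B1 X" "x \<in> ival p"
  shows "(\<exists>q\<in>B1 X. x \<in> q) \<and> (\<forall>q\<in>X. x \<in> q \<longrightarrow> q \<subseteq> ival p)"
  using assms
proof (induction "Max p - Min p" arbitrary: p rule: less_induct)
  case less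
  obtain a b where ab: "a < b" "p = {a,b}" "Min p = a" "Max p = b" "ival p = {a..b}"
    using B1_obtain_pair[OF inP less.prems(1)] by blast
  have pX: "p \<in> X" using less.prems(1) B1_subset by blast
  show ?case
  proof (cases "x \<in> p")
    case True
    then have "q = p" if "q \<in> X" "x \<in> q" for q using inP_disjoint[OF inP that(1) pX] that by blast
    moreover have "p \<subseteq> ival p" using ab by auto
    ultimately show ?thesis using True less.prems(1) by blast
  next
    case False
    then have "x \<in> {Min p + 1 .. Max p - 1}" using less.prems(2) ab by auto
    moreover obtain C where C: "C \<subseteq> B1 X" "{Min p + 1 .. Max p - 1} = \<Union>(ival ` C)"
      using B1_inner_cov0[OF less.prems(1)] unfolding cov0_def by metis
    ultimately obtain r where r: "r \<in> C" "x \<in> ival r" by blast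
    have rB: "r \<in> B1 X" using r C by auto
    obtain c d where cd: "Min r = c" "Max r = d" "ival r = {c..d}" "c < d"
      using B1_obtain_pair[OF inP rB] by blast
    have sub: "ival r \<subseteq> {Min p + 1 .. Max p - 1}" using C r by auto
    then have "Max r - Min r < Max p - Min p" using cd ab by auto
    moreover have "{Min p + 1 .. Max p - 1} \<subseteq> ival p" using ab by auto
    then have "ival r \<subseteq> ival p" using sub by blast
    ultimately show ?thesis using less.hyps[OF _ rB r(2)] by blast
  qed
qed

lemma cov0_subset_B1:
  assumes "cov0 X Y" shows "Y \<subseteq> \<Union>(B1 X)"
proof
  fix h assume "h \<in> Y"
  then obtain r where "r \<in> B1 X" "h \<in> ival r" using assms unfolding cov0_def by blast
  then show "h \<in> \<Union>(B1 X)" using B1_ival_nested by blast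
qed

lemma B0_disjoint_ival:
  assumes "q \<in> B0 X" "z \<in> q" "p \<in> B1 X" shows "z \<notin> ival p"
proof
  assume "z \<in> ival p"
  then obtain r where r: "r \<in> B1 X" "z \<in> r" using B1_ival_nested[OF assms(3)] by meson
  have "r \<noteq> q" using r(1) assms(1) B0_B1_disjoint by blast
  then show False using inP_disjoint[OF inP] r assms(1,2) B0_subset B1_subset by blast
qed

lemma lower_segment_covered: "k < s \<Longrightarrow> {1 .. xs ! k} \<subseteq> \<Union>X"
proof (induction k)
  case 0
  have "{1 .. xs ! 0 - 1} \<subseteq> \<Union>X" using cov0_subset_B1[OF left_cov0] 0 B1_subset by fastforce
  moreover have "xs ! 0 \<in> \<Union>X" using B0_pair_in_X[OF 0] unfolding B0_pair_def by blast
  moreover have "{1 .. xs ! 0} \<subseteq> {1 .. xs ! 0 - 1} \<union> {xs ! 0}" by auto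
  ultimately show ?case by blast
next
  case (Suc k)
  have "{xs ! k + 1 .. xs ! (Suc k) - 1} \<subseteq> \<Union>X"
    using cov0_subset_B1[OF lower_gap_cov0] Suc.prems B1_subset by fastforce
  moreover have "xs ! Suc k \<in> \<Union>X" using B0_pair_in_X[OF Suc.prems] unfolding B0_pair_def by blast
  moreover have "{1 .. xs ! k} \<subseteq> \<Union>X" using Suc by simp
  moreover have "{1 .. xs ! Suc k} \<subseteq> {1 .. xs ! k} \<union> {xs ! k + 1 .. xs ! (Suc k) - 1} \<union> {xs ! Suc k}"
    by auto
  ultimately show ?case by blast
qed

lemma upper_segment_covered: "k < s \<Longrightarrow> {xs ! (2*s - 1 - k) .. N} \<subseteq> \<Union>X"
proof (induction k)
  case 0
  have "{xs ! (2*s - 1) + 1 .. N} \<subseteq> \<Union>X"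
    using cov0_subset_B1[OF right_cov0] 0 B1_subset by fastforce
  moreover have "xs ! (2*s - 1) \<in> \<Union>X" using B0_pair_in_X[OF 0] unfolding B0_pair_def by auto
  moreover have "{xs ! (2*s - 1) .. N} \<subseteq> {xs ! (2*s - 1)} \<union> {xs ! (2*s - 1) + 1 .. N}" by auto
  ultimately show ?case by auto
next
  case (Suc k)
  define m where "m = 2*s - 1 - Suc k"
  have m: "m + 1 = 2*s - 1 - k" "s \<le> m" "m + 1 < 2*s" using Suc.prems unfolding m_def by auto
  have "{xs ! m + 1 .. xs ! (m+1) - 1} \<subseteq> \<Union>X"
    using cov0_subset_B1[OF upper_gap_cov0[OF m(2,3)]] B1_subset by fastforce
  moreover have "xs ! m \<in> \<Union>X" using B0_pair_in_X[OF Suc.prems] unfolding B0_pair_def m_def by blast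
  moreover have "{xs ! (m+1) .. N} \<subseteq> \<Union>X" using Suc m(1) by simp
  moreover have "{xs ! m .. N} \<subseteq> {xs ! m} \<union> {xs ! m + 1 .. xs ! (m+1) - 1} \<union> {xs ! (m+1) .. N}"
    by auto
  ultimately show ?case unfolding m_def by blast
qed

text \<open>The gaps between consecutive \<open>i\<^sub>k\<close> have even length, so the \<open>i\<^sub>k\<close> alternate in parity,
  starting with an odd one.\<close>

lemma nth_odd_iff: "k < s \<Longrightarrow> odd (xs ! k) \<longleftrightarrow> even k"
proof (induction k)
  case 0
  have "even (card {1 .. xs ! 0 - 1})" using cov0_even_card[OF inP left_cov0] 0 by auto
  moreover have "xs ! 0 \<ge> 1" using nth_bounds[of 0] 0 by auto
  ultimately show ?case by auto
next
  case (Suc k)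
  have "even (card {xs ! k + 1 .. xs ! (k+1) - 1})" using cov0_even_card[OF inP lower_gap_cov0] Suc.prems by auto
  moreover have "xs ! k < xs ! (Suc k)" using nth_less_iff[of k "Suc k"] Suc.prems by auto
  ultimately have "odd (xs ! (Suc k) - xs ! k)" by auto
  then have "odd (xs ! (Suc k)) \<longleftrightarrow> even (xs ! k)"
    using \<open>xs ! k < xs ! (Suc k)\<close> by (auto simp: even_diff_nat)
  then show ?case using Suc by auto
qed

end

section \<open>The arcs \<open>[[ij]]\<close> and \<open>'\<epsilon>\<close> on \<open>X\<^sup>-\<^sub>N\<^sub>-\<^sub>2\<close>\<close>

definition arc :: "nat \<Rightarrow> nat set \<Rightarrow> nat set" where
  "arc N p = (if odd (Max p - Min p) then {Min p..Max p} else {Max p..N} \<union> {1..Min p})"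

definition arc_count :: "nat \<Rightarrow> nat set set \<Rightarrow> nat \<Rightarrow> nat" where
  "arc_count N X h = card {p\<in>X. h \<in> arc N p}"

lemma wr_asym: "wr i j \<Longrightarrow> \<not> wr j i"
  unfolding wr_def by auto

lemma dbr_eq_arc: "wr i j \<Longrightarrow> dbr N i j = arc N {i,j}"
  unfolding wr_def dbr_def arc_def by (auto simp: min_def max_def)

lemma wr_doubleton:
  assumes "(a::nat) < b"
  shows "wr a b \<longleftrightarrow> odd (b - a)" "wr b a \<longleftrightarrow> even (b - a)"
  using assms unfolding wr_def by auto

lemma bij_betw_writings:
  assumes "inP N X"
  shows "bij_betw (\<lambda>(i,j). {i,j}) {(i,j). {i,j} \<in> X \<and> wr i j} X"
proof (rule bij_betwI')
  fix x y assume "x \<in> {(i,j). {i,j} \<in> X \<and> wr i j}" "y \<in> {(i,j). {i,j} \<in> X \<and> wr i j}"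
  then show "((\<lambda>(i,j). {i,j}) x = (\<lambda>(i,j). {i,j}) y) \<longleftrightarrow> x = y"
    using wr_asym by (auto simp: doubleton_eq_iff)
next
  fix p assume "p \<in> X"
  moreover obtain a b where ab: "a < b" "p = {a,b}" using inP_obtain_pair[OF assms \<open>p \<in> X\<close>] .
  ultimately show "\<exists>x\<in>{(i,j). {i,j} \<in> X \<and> wr i j}. p = (\<lambda>(i,j). {i,j}) x"
  proof (cases "odd (b - a)")
    case True
    then show ?thesis using ab \<open>p \<in> X\<close> wr_doubleton(1)[OF ab(1)] by (intro bexI[of _ "(a,b)"]) auto
  next
    case False
    then show ?thesis using ab \<open>p \<in> X\<close> wr_doubleton(2)[OF ab(1)]
      by (intro bexI[of _ "(b,a)"]) (auto simp: insert_commute)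
  qed
qed auto

lemma fsum_reindex:
  assumes "bij_betw g A B" "\<And>a. a \<in> A \<Longrightarrow> f a = f' (g a)"
  shows "fsum f A = fsum f' B"
proof -
  have "bij_betw g {x\<in>A. h \<in> f x} {y\<in>B. h \<in> f' y}" for h
    using assms unfolding bij_betw_def inj_on_def by auto
  then show ?thesis unfolding fsum_def using bij_betw_same_card by metis
qed

lemma eps_Xm:
  assumes "X \<in> Xm N"
  shows "eps N X = {h. odd (arc_count N X h)}"
proof -
  have "inP N X" using assms unfolding Xm_def starP_def by auto
  then have "fsum (\<lambda>(i,j). dbr N i j) {(i,j). {i,j} \<in> X \<and> wr i j} = fsum (arc N) X"
    by (rule fsum_reindex[OF bij_betw_writings]) (auto simp: dbr_eq_arc)
  then show ?thesis using assms unfolding eps_def Let_def fsum_def arc_count_def by simp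
qed

context star_condI
begin

lemma arc_B1: "p \<in> B1 X \<Longrightarrow> arc N p = ival p"
  using B1_obtain_pair[OF inP] unfolding arc_def by metis

lemma mem_arc_B0_pair:
  assumes "k < s"
  shows "h \<in> arc N (B0_pair k) \<longleftrightarrow> (1 \<le> h \<and> h \<le> xs ! k) \<or> (xs ! (2*s - 1 - k) \<le> h \<and> h \<le> N)"
proof -
  have "arc N (B0_pair k) = {xs ! (2*s - 1 - k) .. N} \<union> {1 .. xs ! k}"
    unfolding arc_def using B0_pair_Min_Max[OF assms] B0_pair_diff_even[OF assms] by simp
  then show ?thesis by auto
qed

lemma not_in_arc_if_not_in_supp:
  assumes "h \<notin> \<Union>X" "q \<in> X" shows "h \<notin> arc N q"
proof
  assume h: "h \<in> arc N q"
  from X_cases[OF assms(2)] show False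
  proof
    assume qB: "q \<in> B1 X"
    then have "h \<in> ival q" using h arc_B1 by simp
    then obtain r where "r \<in> B1 X" "h \<in> r" using B1_ival_nested[OF qB] by blast
    then show False using assms(1) B1_subset by blast
  next
    assume "\<exists>k<s. q = B0_pair k"
    then obtain k where k: "k < s" "q = B0_pair k" by blast
    then have "h \<in> {1 .. xs ! k} \<or> h \<in> {xs ! (2*s - 1 - k) .. N}" using h mem_arc_B0_pair by auto
    then show False
      using assms(1) lower_segment_covered[OF k(1)] upper_segment_covered[OF k(1)] by blast
  qed
qed

lemma mem_arc_B0_pair_iff:
  assumes k: "k < s" and k': "k' < s" and x: "x \<in> B0_pair k'"
  shows "x \<in> arc N (B0_pair k) \<longleftrightarrow> k' \<le> k"
proof -
  have i: "k < 2*s" "2*s - 1 - k < 2*s" "k' < 2*s" "2*s - 1 - k' < 2*s" using k k' by auto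
  have "xs ! k < xs ! (2*s - 1 - k')" "xs ! k' < xs ! (2*s - 1 - k)" using nth_less_iff k k' by auto
  moreover have "xs ! k' \<le> xs ! k \<longleftrightarrow> k' \<le> k" using nth_le_iff i by auto
  moreover have "xs ! (2*s - 1 - k) \<le> xs ! (2*s - 1 - k') \<longleftrightarrow> k' \<le> k"
    using nth_le_iff[OF i(2) i(4)] k k' by auto
  moreover have "1 \<le> xs ! k'" "xs ! (2*s - 1 - k') \<le> N" using nth_bounds i by auto
  moreover have "x = xs ! k' \<or> x = xs ! (2*s - 1 - k')" using x unfolding B0_pair_def by auto
  ultimately show ?thesis using mem_arc_B0_pair[OF k] by auto
qed

lemma mem_arc_cong:
  assumes p: "p \<in> X" and x: "x \<in> p" and y: "y \<in> p" and q: "q \<in> X"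
  shows "x \<in> arc N q \<longleftrightarrow> y \<in> arc N q"
proof (cases "p \<in> B1 X")
  case pB: True
  obtain a b where ab: "a < b" "p = {a,b}" "ival p = {a..b}" "1 \<le> a" "b \<le> N"
    using B1_obtain_pair[OF inP pB] by blast
  from X_cases[OF q] show ?thesis
  proof
    assume qB: "q \<in> B1 X"
    have "x \<in> ival q \<Longrightarrow> p \<subseteq> ival q" "y \<in> ival q \<Longrightarrow> p \<subseteq> ival q"
      using B1_ival_nested[OF qB] p x y by meson+
    then show ?thesis using x y arc_B1[OF qB] by auto
  next
    assume "\<exists>k<s. q = B0_pair k"
    then obtain k where k: "k < s" "q = B0_pair k" by blast
    have "xs ! k \<notin> ival p" "xs ! (2*s - 1 - k) \<notin> ival p"
      using B0_disjoint_ival[OF B0_pair_in_B0[OF k(1)] _ pB] unfolding B0_pair_def by auto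
    moreover have "x = a \<or> x = b" "y = a \<or> y = b" using x y ab by auto
    ultimately show ?thesis using mem_arc_B0_pair[OF k(1)] k(2) ab by auto
  qed
next
  case False
  then obtain k' where k': "k' < s" "p = B0_pair k'" using X_cases[OF p] by blast
  from X_cases[OF q] show ?thesis
  proof
    assume qB: "q \<in> B1 X"
    have "x \<notin> ival q" "y \<notin> ival q" using B0_disjoint_ival[OF B0_pair_in_B0[OF k'(1)] _ qB] x y k' by auto
    then show ?thesis using arc_B1[OF qB] by auto
  next
    assume "\<exists>k<s. q = B0_pair k"
    then obtain k where k: "k < s" "q = B0_pair k" by blast
    show ?thesis using mem_arc_B0_pair_iff[OF k(1) k'(1)] k(2) k'(2) x y by simp
  qed
qed

lemma arc_count_cong: "p \<in> X \<Longrightarrow> x \<in> p \<Longrightarrow> y \<in> p \<Longrightarrow> arc_count N X x = arc_count N X y"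
  unfolding arc_count_def using mem_arc_cong by metis

lemma arc_count_B0_pair:
  assumes k: "k < s" and x: "x \<in> B0_pair k"
  shows "arc_count N X x = s - k"
proof -
  have "{q\<in>X. x \<in> arc N q} = B0_pair ` {k..<s}"
  proof
    show "{q\<in>X. x \<in> arc N q} \<subseteq> B0_pair ` {k..<s}"
    proof
      fix q assume q: "q \<in> {q\<in>X. x \<in> arc N q}"
      have "q \<notin> B1 X"
        using q arc_B1 B0_disjoint_ival[OF B0_pair_in_B0[OF k] x] by auto
      then obtain k' where "k' < s" "q = B0_pair k'" using X_cases q by blast
      then show "q \<in> B0_pair ` {k..<s}" using mem_arc_B0_pair_iff[OF _ k x] q by auto
    qed
    show "B0_pair ` {k..<s} \<subseteq> {q\<in>X. x \<in> arc N q}"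
      using mem_arc_B0_pair_iff[OF _ k x] B0_pair_in_X by auto
  qed
  moreover have "inj_on B0_pair {k..<s}" using inj_on_B0_pair by (rule inj_on_subset) auto
  ultimately show ?thesis unfolding arc_count_def using card_image by fastforce
qed

end

section \<open>Alternating sums\<close>

definition alt_sum :: "nat set \<Rightarrow> int" where
  "alt_sum E = (\<Sum>h\<in>E. (-1)^h)"

definition weight :: "nat \<Rightarrow> int" where
  "weight k = (if even k then -2 else 2)"

definition t_of :: "nat \<Rightarrow> int" where
  "t_of s = (if even s then int s else - int s - 1)"

definition t_range :: "nat \<Rightarrow> int set" where
  "t_range s = {- 2 * int ((s + 1) div 2) .. 2 * int (s div 2)}"

lemma t_range_double: "t_range (2*a) = {- 2 * int a .. 2 * int a}"
  unfolding t_range_def by simp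

lemma t_range_Suc_double: "t_range (Suc (2*a)) = {- 2 * int a - 2 .. 2 * int a}"
  unfolding t_range_def by simp

lemma t_of_in_t_range: "t_of s \<in> t_range s"
  by (cases "even s") (auto elim!: evenE oddE simp: t_of_def t_range_double t_range_Suc_double)

lemma t_range_mono: "t_of s \<in> t_range s' \<Longrightarrow> t_range s \<subseteq> t_range s'"
  by (cases "even s"; cases "even s'")
    (auto elim!: evenE oddE simp: t_of_def t_range_double t_range_Suc_double)

lemma sum_weight_in_t_range: "K \<subseteq> {..<s} \<Longrightarrow> sum weight K \<in> t_range s"
proof (induction s arbitrary: K)
  case 0
  then show ?case by (simp add: t_range_def)
next
  case (Suc s)
  have "K - {s} \<subseteq> {..<s}" using Suc.prems by auto
  then have "sum weight (K - {s}) \<in> t_range s" by (rule Suc.IH)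
  moreover have "finite K" using Suc.prems finite_subset by blast
  then have "sum weight K = sum weight (K - {s}) + (if s \<in> K then weight s else 0)"
    by (simp add: sum.remove)
  moreover have "(Suc s + 1) div 2 = (s + 1) div 2 + (if even s then 1 else 0)"
    "Suc s div 2 = s div 2 + (if odd s then 1 else 0)" by presburger+
  ultimately show ?case by (cases "even s"; cases "s \<in> K") (auto simp: t_range_def weight_def)
qed

lemma sum_weight_odd_distance: "sum weight {k. k < s \<and> odd (s - k)} = t_of s"
proof (induction s rule: less_induct)
  case (less s)
  consider "s = 0" | "s = 1" | n where "s = n + 2" by (metis One_nat_def add_2_eq_Suc' not0_implies_Suc)
  then show ?case
  proof cases
    case 1
    then show ?thesis by (simp add: t_of_def)
  next
    case 2
    then have "{k. k < s \<and> odd (s - k)} = {0}" by auto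
    then show ?thesis using 2 by (simp add: t_of_def weight_def)
  next
    case 3
    then have "{k. k < s \<and> odd (s - k)} = insert (n+1) {k. k < n \<and> odd (n - k)}"
      by (auto simp: less_Suc_eq)
    then have "sum weight {k. k < s \<and> odd (s - k)} = weight (n+1) + t_of n"
      using less.IH[of n] 3 by simp
    then show ?thesis unfolding 3 t_of_def weight_def by auto
  qed
qed

context star_condI
begin

lemma alt_sum_B1: "p \<in> B1 X \<Longrightarrow> alt_sum p = 0"
proof -
  assume "p \<in> B1 X"
  then obtain a b where ab: "a < b" "p = {a,b}" "odd (b - a)" using B1_obtain_pair[OF inP] by metis
  then have "odd a \<longleftrightarrow> even b" by (metis even_add le_add_diff_inverse less_imp_le_nat)
  then show ?thesis unfolding alt_sum_def using ab by auto
qed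

lemma alt_sum_B0_pair: "k < s \<Longrightarrow> alt_sum (B0_pair k) = weight k"
proof -
  assume k: "k < s"
  have "even (xs ! (2*s - 1 - k)) \<longleftrightarrow> even (xs ! k)"
    using B0_pair_diff_even[OF k] B0_pair_less[OF k]
    by (metis even_add le_add_diff_inverse less_imp_le_nat)
  then show ?thesis
    using nth_odd_iff[OF k] B0_pair_less[OF k] unfolding alt_sum_def B0_pair_def weight_def by auto
qed

lemma alt_sum_Union:
  assumes "C \<subseteq> X"
  shows "alt_sum (\<Union>C) = sum weight {k. k < s \<and> B0_pair k \<in> C}"
proof -
  have fin: "finite C" using finite_subset[OF assms inP_finite[OF inP]] .
  have "finite p" if "p \<in> C" for p
    using that assms inP_obtain_pair[OF inP] by blast
  moreover have "\<forall>p\<in>C. \<forall>q\<in>C. p \<noteq> q \<longrightarrow> p \<inter> q = {}" using inP_disjoint[OF inP] assms by blast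
  ultimately have "alt_sum (\<Union>C) = (\<Sum>p\<in>C. alt_sum p)"
    unfolding alt_sum_def by (subst sum.Union_disjoint) (auto simp: comp_def)
  also have "\<dots> = (\<Sum>p\<in>C \<inter> B0 X. alt_sum p) + (\<Sum>p\<in>C \<inter> B1 X. alt_sum p)"
    using fin B0_B1_disjoint[of X] B0_Un_B1[OF inP] assms
    by (subst sum.union_disjoint[symmetric]) (auto intro: sum.cong)
  also have "(\<Sum>p\<in>C \<inter> B1 X. alt_sum p) = 0" using alt_sum_B1 by simp
  also have "C \<inter> B0 X = B0_pair ` {k. k < s \<and> B0_pair k \<in> C}" using B0_eq_image by auto
  also have "(\<Sum>p\<in>B0_pair ` {k. k < s \<and> B0_pair k \<in> C}. alt_sum p)
      = (\<Sum>k | k < s \<and> B0_pair k \<in> C. alt_sum (B0_pair k))"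
    by (rule sum.reindex_cong[OF inj_on_subset[OF inj_on_B0_pair]]) auto
  also have "\<dots> = sum weight {k. k < s \<and> B0_pair k \<in> C}" using alt_sum_B0_pair by simp
  finally show ?thesis by simp
qed

lemma alt_sum_Union_in_t_range: "C \<subseteq> X \<Longrightarrow> alt_sum (\<Union>C) \<in> t_range s"
  using alt_sum_Union sum_weight_in_t_range[of "{k. k < s \<and> B0_pair k \<in> C}" s] by auto

lemma odd_arc_count_eq_Union:
  "{h. odd (arc_count N X h)} = \<Union>{p\<in>X. p \<subseteq> {h. odd (arc_count N X h)}}"
proof
  show "{h. odd (arc_count N X h)} \<subseteq> \<Union>{p\<in>X. p \<subseteq> {h. odd (arc_count N X h)}}"
  proof
    fix h assume h: "h \<in> {h. odd (arc_count N X h)}"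
    have "h \<in> \<Union>X"
    proof (rule ccontr)
      assume "h \<notin> \<Union>X"
      then have "{q\<in>X. h \<in> arc N q} = {}" using not_in_arc_if_not_in_supp by blast
      then have "arc_count N X h = 0" unfolding arc_count_def by (metis card.empty)
      then show False using h by simp
    qed
    then obtain p where p: "p \<in> X" "h \<in> p" by blast
    have "odd (arc_count N X y)" if "y \<in> p" for y
      using arc_count_cong[OF p(1) that p(2)] h by simp
    then have "p \<subseteq> {h. odd (arc_count N X h)}" by blast
    then show "h \<in> \<Union>{p\<in>X. p \<subseteq> {h. odd (arc_count N X h)}}" using p by auto
  qed
qed auto

lemma alt_sum_odd_arc_count: "alt_sum {h. odd (arc_count N X h)} = t_of s"
proof -
  let ?E = "{h. odd (arc_count N X h)}"
  have "B0_pair k \<subseteq> ?E \<longleftrightarrow> odd (s - k)" if k: "k < s" for k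
    using arc_count_B0_pair[OF k] unfolding B0_pair_def by auto
  then have "{k. k < s \<and> B0_pair k \<in> {p\<in>X. p \<subseteq> ?E}} = {k. k < s \<and> odd (s - k)}"
    using B0_pair_in_X by auto
  then show ?thesis
    using alt_sum_Union[of "{p\<in>X. p \<subseteq> ?E}"] odd_arc_count_eq_Union sum_weight_odd_distance by auto
qed

lemma arc_count_N:
  assumes "{i,N} \<in> X" "odd N"
  shows "arc_count N X N = s + (if even i then 1 else 0)"
proof -
  have "{i,N} \<subseteq> SN N" "card {i,N} = 2" using inP assms unfolding inP_def by auto
  then have iN: "i < N" by (cases "i = N") (auto simp: SN_def)
  have "N \<in> arc N q" if q: "q \<in> B0 X" for q
  proof -
    obtain k where "k < s" "q = B0_pair k" using q B0_eq_image by auto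
    then show ?thesis using mem_arc_B0_pair nth_bounds[of "2*s - 1 - k"] by auto
  qed
  moreover have "N \<in> arc N q \<longleftrightarrow> N \<in> q" if q: "q \<in> B1 X" for q
  proof -
    obtain a b where "q = {a,b}" "ival q = {a..b}" "a < b" "b \<le> N"
      using B1_obtain_pair[OF inP q] by blast
    then show ?thesis using arc_B1[OF q] by auto
  qed
  ultimately have "{q\<in>X. N \<in> arc N q} = B0 X \<union> {q\<in>B1 X. N \<in> q}"
    using B0_Un_B1[OF inP] by blast
  moreover have "{q\<in>B1 X. N \<in> q} = (if odd (N - i) then {{i,N}} else {})"
  proof -
    have "q = {i,N}" if "q \<in> X" "N \<in> q" for q
      using inP_disjoint[OF inP that(1) assms(1)] that(2) by blast
    then have "{q\<in>B1 X. N \<in> q} = {q\<in>B1 X. q = {i,N}}" using B1_subset by blast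
    also have "\<dots> = (if odd (N - i) then {{i,N}} else {})" using B1_doubleton_iff[OF iN] assms by auto
    finally show ?thesis .
  qed
  moreover have "finite (B0 X)" using finite_subset[OF B0_subset inP_finite[OF inP]] .
  moreover have "{i,N} \<notin> B0 X" if "odd (N - i)" using B0_doubleton_iff[OF iN] that by simp
  moreover have "odd (N - i) \<longleftrightarrow> even i" using iN assms(2) by (auto simp: even_diff_nat)
  ultimately show ?thesis unfolding arc_count_def s_def by (auto simp: card_insert_if)
qed

end

section \<open>Chains in \<open>X\<^sub>N\<^sub>-\<^sub>2\<close>\<close>

lemma Xm_obtain_star_condI:
  assumes "X \<in> Xm N"
  obtains xs where "star_condI N X xs (card (B0 X))"
proof -
  from assms have st: "starP N X" and "condI N X" unfolding Xm_def condIII_def by auto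
  from st obtain xs where sq: "seqOK N X xs" unfolding starP_def by blast
  then have "star_condI N X xs (card (B0 X))"
    using st \<open>condI N X\<close> iseq_eqI[OF sq] unfolding star_condI_def starP_def condI_def Let_def by auto
  then show thesis by (rule that)
qed

lemma alt_sum_eps_Xm: "X \<in> Xm N \<Longrightarrow> alt_sum (eps N X) = t_of (card (B0 X))"
  using Xm_obtain_star_condI star_condI.alt_sum_odd_arc_count eps_Xm by metis

lemma N_mem_eps_Xm:
  assumes "odd N" "X \<in> Xm N"
  shows "N \<in> eps N X"
proof -
  obtain xs where X: "star_condI N X xs (card (B0 X))" using Xm_obtain_star_condI[OF assms(2)] .
  from assms(2) obtain i where i: "{i,N} \<in> X" "even (card (B0 X)) \<longleftrightarrow> even i"
    unfolding Xm_def condIII_def by (cases "even (card (B0 X))") auto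
  then show ?thesis
    using star_condI.arc_count_N[OF X i(1) assms(1)] eps_Xm[OF assms(2)] by auto
qed

lemma alt_sum_span2_Xm:
  assumes "Y \<in> Xm N" "E \<in> span2 Y"
  shows "alt_sum E \<in> t_range (card (B0 Y))"
proof -
  obtain ys where Y: "star_condI N Y ys (card (B0 Y))" using Xm_obtain_star_condI[OF assms(1)] .
  obtain C where "C \<subseteq> Y" "E = \<Union>C"
    using span2_obtain_Union[OF star_condI.inP[OF Y] assms(2)] .
  then show ?thesis using star_condI.alt_sum_Union_in_t_range[OF Y] by simp
qed

lemma span2_N_imp_Xm:
  assumes "Y \<in> XX N" "E \<in> span2 Y" "N \<in> E"
  shows "Y \<in> Xm N"
proof -
  have Y: "Y \<in> Xp N \<or> Y \<in> Xm N" using assms(1) unfolding XX_def by blast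
  then have "starP N Y" unfolding Xp_def Xm_def by blast
  then have "inP N Y" unfolding starP_def by blast
  then obtain C where "C \<subseteq> Y" "E = \<Union>C" using span2_obtain_Union assms(2) by metis
  then have "N \<in> \<Union>Y" using assms(3) by blast
  then have "Y \<notin> Xp N" unfolding Xp_def condII_def by blast
  then show ?thesis using Y by blast
qed

lemma preceq_t_range:
  assumes "odd N" "preceq N X Y" "X \<in> Xm N"
  shows "Y \<in> Xm N \<and> t_of (card (B0 X)) \<in> t_range (card (B0 Y))"
proof -
  have "(\<lambda>X Y. X \<in> XX N \<and> Y \<in> XX N \<and> eps N X \<in> span2 Y)\<^sup>*\<^sup>* X Y"
    using assms(2) unfolding preceq_def by blast
  then show ?thesis
  proof (induction rule: rtranclp_induct)
    case base
    then show ?case using assms(3) t_of_in_t_range by blast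
  next
    case (step Z W)
    then have W: "W \<in> Xm N" using span2_N_imp_Xm N_mem_eps_Xm[OF assms(1)] by blast
    then have "t_of (card (B0 Z)) \<in> t_range (card (B0 W))"
      using alt_sum_span2_Xm alt_sum_eps_Xm step by metis
    then show ?case using W step.IH t_range_mono by blast
  qed
qed

lemma Xtm_t_of:
  assumes "even t" "B \<in> Xtm N t"
  shows "B \<in> Xm N" "t_of (card (B0 B)) = t"
proof -
  show "B \<in> Xm N" using assms(2) unfolding Xtm_def by (auto split: if_splits)
  show "t_of (card (B0 B)) = t"
  proof (cases "t \<ge> 0")
    case True
    then have "int (card (B0 B)) = t" using assms(2) unfolding Xtm_def by (auto split: if_splits)
    then show ?thesis using assms(1) unfolding t_of_def by (metis even_of_nat)
  next
    case False
    then have c: "int (card (B0 B)) = - t - 1" using assms(2) unfolding Xtm_def by (auto split: if_splits)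
    moreover have "odd (- t - 1)" using assms(1) by simp
    ultimately have "odd (card (B0 B))" by (metis even_of_nat)
    then show ?thesis using c unfolding t_of_def by simp
  qed
qed

theorem mainTheorem10:
  fixes N :: nat and t t' :: int and B B' :: "nat set set"
  assumes "odd N" and "N \<ge> 3"
    and "even t" and "even t'"
    and "B' \<in> Xtm N t'" and "B \<in> Xtm N t"
    and "preceq N B' B"
    and "t \<ge> 0"
  shows "t' = t \<or> \<bar>t' + 1\<bar> < \<bar>t + 1\<bar>"
proof -
  have "t' \<in> t_range (card (B0 B))" and t: "t_of (card (B0 B)) = t"
    using preceq_t_range[OF assms(1,7)] Xtm_t_of[OF assms(4,5)] Xtm_t_of[OF assms(3,6)] by auto
  moreover have "even (card (B0 B))" using t \<open>t \<ge> 0\<close> unfolding t_of_def by (auto split: if_splits)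
  then obtain a where "card (B0 B) = 2 * a" by blast
  ultimately have "t' \<in> {- 2 * int a .. 2 * int a}" "t = 2 * int a"
    by (auto simp: t_range_double t_of_def)
  then show ?thesis using \<open>even t'\<close> by auto
qed

end
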